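(* Let $\Delta^{(w)}$ be a dyadic cube of rank $w$, let $\sum_{\mathbf n\in\mathbb N_0^d}a_{\mathbf n}W_{\mathbf n}$ be a $d$-fold Walsh series and $\tau$ the quasimeasure generated by it. If $\tau(\Delta)=0$ for every dyadic cube $\Delta\subset\Delta^{(w)}$, then $S_{2^w\mathbf M}(\mathbf g)=0$ for all $\mathbf g\in\Delta^{(w)}$ and all $\mathbf M\in\mathbb N^d$.
   Context: Fix $d\ge2$. $\mathbb G$ is the dyadic group: sequences $g=(g_k)_{k\ge0}$, $g_k\in\{0,1\}$, coordinatewise addition mod 2, product topology; $\mathbb G^d$ its $d$-th power. For $n\in\mathbb N_0$, $n=\sum_kn_k2^k$, $n_k\in\{0,1\}$. Dyadic interval of rank $k$: $\Delta^{(k)}_m=\{g: g_t=m_{k-1-t},\ 0\le t<k\}$, $0\le m<2^k$; dyadic cube of rank $k$: $\Delta^{(k)}_{\mathbf m}=\prod_l\Delta^{(k)}_{m^l}$. Vector order coordinatewise, $\mathbf 1=(1,\dots,1)$. Walsh functions $W_n(g)=\prod_k(-1)^{g_kn_k}$, $W_{\mathbf n}(\mathbf g)=\prod_lW_{n^l}(g^l)$. Partial sums $S_{\mathbf N}(\mathbf g)=\sum_{\mathbf n<\mathbf N}a_{\mathbf n}W_{\mathbf n}(\mathbf g)$. A quasimeasure is a function $\tau$ on dyadic cubes with $\tau(\Delta^{(k)}_{\mathbf m})=\sum_{\boldsymbol\sigma\in\{0,1\}^d}\tau(\Delta^{(k+1)}_{2\mathbf m+\boldsymbol\sigma})$; the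 quasimeasure generated by the series is $\tau(\Delta^{(k)})=2^{-kd}S_{2^k\mathbf 1}(\mathbf g)$ for $\mathbf g\in\Delta^{(k)}$ ($S_{2^k\mathbf 1}$ is constant on each dyadic cube of rank $k$). *)

theory Defs
  imports Complex_Main "HOL-Library.FuncSet"
begin

text \<open>Dyadic group element: a 0/1 sequence, represented as nat => bool (True = 1).
  A point of G^d is a function on {..<d} (extensional, undefined outside).\<close>

definition walsh :: "nat \<Rightarrow> (nat \<Rightarrow> bool) \<Rightarrow> real" where
  "walsh n g = (\<Prod>k<n. (-1::real) ^ (if g k \<and> bit n k then 1 else 0))"

definition walsh_d :: "nat \<Rightarrow> (nat \<Rightarrow> nat) \<Rightarrow> (nat \<Rightarrow> nat \<Rightarrow> bool) \<Rightarrow> real" where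
  "walsh_d d n g = (\<Prod>l<d. walsh (n l) (g l))"

definition partial_sum ::
  "nat \<Rightarrow> ((nat \<Rightarrow> nat) \<Rightarrow> real) \<Rightarrow> (nat \<Rightarrow> nat) \<Rightarrow> (nat \<Rightarrow> nat \<Rightarrow> bool) \<Rightarrow> real" where
  "partial_sum d a N g = (\<Sum>n\<in>PiE {..<d} (\<lambda>l. {..<N l}). a n * walsh_d d n g)"

definition dyadic_interval :: "nat \<Rightarrow> nat \<Rightarrow> (nat \<Rightarrow> bool) set" where
  "dyadic_interval k m = {g. \<forall>t<k. g t = bit m (k - 1 - t)}"

definition dyadic_cube :: "nat \<Rightarrow> nat \<Rightarrow> (nat \<Rightarrow> nat) \<Rightarrow> (nat \<Rightarrow> nat \<Rightarrow> bool) set" where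
  "dyadic_cube d k m = PiE {..<d} (\<lambda>l. dyadic_interval k (m l))"

definition valid_index :: "nat \<Rightarrow> nat \<Rightarrow> (nat \<Rightarrow> nat) \<Rightarrow> bool" where
  "valid_index d k m \<longleftrightarrow> (\<forall>l<d. m l < 2 ^ k)"

definition gen_quasimeasure ::
  "nat \<Rightarrow> ((nat \<Rightarrow> nat) \<Rightarrow> real) \<Rightarrow> nat \<Rightarrow> (nat \<Rightarrow> nat) \<Rightarrow> real" where
  "gen_quasimeasure d a k m =
     partial_sum d a (\<lambda>l. 2 ^ k) (SOME g. g \<in> dyadic_cube d k m) / 2 ^ (k * d)"

end

theory Submission
  imports Defs
begin

text \<open>Choose \<open>K \<ge> w\<close> with \<open>2^w M_l \<le> 2^K\<close>. On a grid of \<open>2^(Kd)\<close> points, one in each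
  dyadic cube of rank \<open>K\<close>, the Walsh functions of index below \<open>2^K\<close> are orthogonal, so these
  coefficients are recovered from the values of \<open>S_(2^K 1)\<close>, i.e. from \<open>\<tau>\<close> on cubes of
  rank \<open>K\<close>. This gives
  \<open>S_N(g) = 2^(-Kd) \<Sum>_h S_(2^K 1)(h) \<Prod>_l D_(N_l)(h_l, g_l)\<close>
  with the Walsh-Dirichlet kernel \<open>D_N(x, y) = \<Sum>_(n<N) W_n(x) W_n(y)\<close>. For \<open>N_l = 2^w M_l\<close>
  the kernel vanishes unless \<open>h_l\<close> and \<open>g_l\<close> share their first \<open>w\<close> digits, and when all of
  them do, \<open>h\<close> lies in a subcube of \<open>\<Delta>^(w)\<close>, on which \<open>\<tau>\<close> and hence \<open>S_(2^K 1)\<close> vanish.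
  Neither \<open>d \<ge> 2\<close>, nor \<open>M \<ge> 1\<close>, nor the validity of the index of \<open>\<Delta>^(w)\<close> is needed.\<close>

lemma not_bit_if_less_power:
  "(n::nat) < 2 ^ K \<Longrightarrow> K \<le> k \<Longrightarrow> \<not> bit n k"
  by (metis bit_take_bit_iff linorder_not_less take_bit_nat_eq_self)

lemma nat_eq_if_bits_below_eq:
  assumes "(n::nat) < 2 ^ K" "n' < 2 ^ K" "\<forall>k<K. bit n k = bit n' k"
  shows "n = n'"
proof (rule bit_eqI)
  fix k show "bit n k = bit n' k"
    using assms not_bit_if_less_power[of n K k] not_bit_if_less_power[of n' K k]
    by (cases "k < K") auto
qed

lemma walsh_eq_prod_lessThan:
  assumes "n < 2 ^ K"
  shows "walsh n x = (\<Prod>k<K. if x k \<and> bit n k then -1 else 1)"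
proof -
  have "walsh n x = (\<Prod>k<n. if x k \<and> bit n k then -1 else 1)"
    unfolding walsh_def by (intro prod.cong) auto
  also have "\<dots> = (\<Prod>k<max n K. if x k \<and> bit n k then -1 else 1)"
    by (rule prod.mono_neutral_left) (auto dest: not_bit_if_less_power[OF less_exp])
  also have "\<dots> = (\<Prod>k<K. if x k \<and> bit n k then -1 else 1)"
    by (rule prod.mono_neutral_right) (auto dest: not_bit_if_less_power[OF assms])
  finally show ?thesis .
qed

lemma walsh_cong:
  "n < 2 ^ K \<Longrightarrow> (\<And>k. k < K \<Longrightarrow> x k = y k) \<Longrightarrow> walsh n x = walsh n y"
  by (simp add: walsh_eq_prod_lessThan)

lemma xor_less_power:
  "(a::nat) < 2 ^ K \<Longrightarrow> b < 2 ^ K \<Longrightarrow> xor a b < 2 ^ K"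
  by (metis take_bit_xor take_bit_nat_eq_self_iff)

lemma walsh_xor_power:
  "walsh (xor n (2 ^ t)) x = (if x t then - walsh n x else walsh n x)"
proof -
  define K where "K = n + Suc t"
  have n: "n < 2 ^ K"
    unfolding K_def using less_exp[of n] by (meson less_le_trans power_increasing le_add1 one_le_numeral)
  have t: "t < K"
    unfolding K_def by simp
  then have "(2::nat) ^ t < 2 ^ K"
    by simp
  with n have "xor n (2 ^ t) < 2 ^ K"
    by (rule xor_less_power)
  then have "walsh (xor n (2 ^ t)) x = (\<Prod>k<K. if x k \<and> bit n k \<noteq> (k = t) then -1 else 1)"
    by (simp add: walsh_eq_prod_lessThan bit_xor_iff bit_exp_iff)
  also have "\<dots> = (\<Prod>k<K. (if x k \<and> bit n k then -1 else 1) * (if k = t \<and> x t then -1 else 1))"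
    by (rule prod.cong) auto
  also have "\<dots> = (if x t then - walsh n x else walsh n x)"
    using t by (simp add: prod.distrib walsh_eq_prod_lessThan[OF n])
  finally show ?thesis .
qed

lemma xor_power_less_mult:
  assumes "(n::nat) < 2 ^ w * M" "t < w"
  shows "xor n (2 ^ t) < 2 ^ w * M"
proof -
  have "drop_bit w (xor n (2 ^ t)) = drop_bit w n"
    using assms(2) by (intro bit_eqI) (auto simp: bit_drop_bit_eq bit_xor_iff bit_exp_iff)
  with assms(1) show ?thesis
    by (metis drop_bit_eq_div less_mult_imp_div_less mult.commute div_less_iff_less_mult
        zero_less_numeral zero_less_power)
qed

definition walsh_dirichlet_kernel :: "nat \<Rightarrow> (nat \<Rightarrow> bool) \<Rightarrow> (nat \<Rightarrow> bool) \<Rightarrow> real" where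
  "walsh_dirichlet_kernel N x y = (\<Sum>n<N. walsh n x * walsh n y)"

text \<open>Flipping bit \<open>t < w\<close> of the summation index is an involution of \<open>{..<2^w * M}\<close>
  that changes the sign of every term.\<close>
lemma walsh_dirichlet_kernel_eq_0:
  assumes "t < w" "x t \<noteq> y t"
  shows "walsh_dirichlet_kernel (2 ^ w * M) x y = 0"
proof -
  let ?flip = "\<lambda>n::nat. xor n (2 ^ t)"
  let ?f = "\<lambda>n. walsh n x * walsh n y"
  have "bij_betw ?flip {..<2 ^ w * M} {..<2 ^ w * M}"
    by (rule bij_betw_byWitness[where f' = ?flip])
       (auto simp: xor.assoc xor_power_less_mult assms(1))
  then have "sum ?f {..<2 ^ w * M} = (\<Sum>n<2 ^ w * M. ?f (?flip n))"
    by (rule sum.reindex_bij_betw[symmetric])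
  also have "\<dots> = - sum ?f {..<2 ^ w * M}"
    using assms(2) by (cases "y t") (simp_all add: walsh_xor_power sum_negf)
  finally show ?thesis
    unfolding walsh_dirichlet_kernel_def by simp
qed

text \<open>One point in each dyadic interval of rank \<open>K\<close>; coordinates from \<open>K\<close> on are left
  \<open>undefined\<close>, which Walsh functions of index below \<open>2^K\<close> never look at.\<close>
definition dyadic_grid :: "nat \<Rightarrow> (nat \<Rightarrow> bool) set" where
  "dyadic_grid K = PiE {..<K} (\<lambda>_. UNIV)"

definition dyadic_grid_d :: "nat \<Rightarrow> nat \<Rightarrow> (nat \<Rightarrow> nat \<Rightarrow> bool) set" where
  "dyadic_grid_d d K = PiE {..<d} (\<lambda>_. dyadic_grid K)"

lemma finite_dyadic_grid: "finite (dyadic_grid K)"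
  unfolding dyadic_grid_def by (simp add: finite_PiE)

lemma walsh_orthogonal_dyadic_grid:
  assumes "n < 2 ^ K" "n' < 2 ^ K"
  shows "(\<Sum>x\<in>dyadic_grid K. walsh n x * walsh n' x) = (if n = n' then 2 ^ K else 0)"
proof -
  define e where "e k b = (if b \<and> bit n k then -1 else 1) * (if b \<and> bit n' k then -1 else (1::real))"
    for k b
  have "(\<Sum>x\<in>dyadic_grid K. walsh n x * walsh n' x) = (\<Sum>x\<in>dyadic_grid K. \<Prod>k<K. e k (x k))"
    using assms by (simp add: walsh_eq_prod_lessThan e_def prod.distrib)
  also have "\<dots> = (\<Prod>k<K. \<Sum>b\<in>UNIV. e k b)"
    unfolding dyadic_grid_def by (rule prod_sum_PiE[symmetric]) auto
  also have "\<dots> = (\<Prod>k<K. if bit n k = bit n' k then 2 else 0)"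
    by (intro prod.cong) (auto simp: e_def UNIV_bool)
  also have "\<dots> = (if n = n' then 2 ^ K else 0)"
  proof (cases "n = n'")
    case False
    then obtain k where "k < K" "bit n k \<noteq> bit n' k"
      using nat_eq_if_bits_below_eq[OF assms] by blast
    then show ?thesis
      using False by (auto simp: prod_zero_iff)
  qed simp
  finally show ?thesis .
qed

lemma walsh_d_orthogonal_dyadic_grid_d:
  assumes "n \<in> PiE {..<d} (\<lambda>_. {..<2 ^ K})" "n' \<in> PiE {..<d} (\<lambda>_. {..<2 ^ K})"
  shows "(\<Sum>h\<in>dyadic_grid_d d K. walsh_d d n h * walsh_d d n' h) = (if n = n' then 2 ^ (K * d) else 0)"
proof -
  have "(\<Sum>h\<in>dyadic_grid_d d K. walsh_d d n h * walsh_d d n' h)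
      = (\<Sum>h\<in>dyadic_grid_d d K. \<Prod>l<d. walsh (n l) (h l) * walsh (n' l) (h l))"
    unfolding walsh_d_def by (simp add: prod.distrib)
  also have "\<dots> = (\<Prod>l<d. \<Sum>x\<in>dyadic_grid K. walsh (n l) x * walsh (n' l) x)"
    unfolding dyadic_grid_d_def by (rule prod_sum_PiE[symmetric]) (auto simp: finite_dyadic_grid)
  also have "\<dots> = (\<Prod>l<d. if n l = n' l then 2 ^ K else 0)"
    using assms by (intro prod.cong refl walsh_orthogonal_dyadic_grid) (blast intro: PiE_mem)+
  also have "\<dots> = (if n = n' then 2 ^ (K * d) else 0)"
  proof (cases "n = n'")
    case False
    then obtain l where "l < d" "n l \<noteq> n' l"
      using PiE_ext[OF assms] by blast
    then show ?thesis
      using False by (auto simp: prod_zero_iff)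
  qed (simp add: power_mult)
  finally show ?thesis .
qed

lemma walsh_coefficient_eq_sum_dyadic_grid_d:
  assumes "n \<in> PiE {..<d} (\<lambda>_. {..<2 ^ K})"
  shows "a n = (\<Sum>h\<in>dyadic_grid_d d K. walsh_d d n h * partial_sum d a (\<lambda>_. 2 ^ K) h) / 2 ^ (K * d)"
proof -
  let ?I = "PiE {..<d} (\<lambda>_. {..<2 ^ K})"
  have "(\<Sum>h\<in>dyadic_grid_d d K. walsh_d d n h * partial_sum d a (\<lambda>_. 2 ^ K) h)
      = (\<Sum>n'\<in>?I. a n' * (\<Sum>h\<in>dyadic_grid_d d K. walsh_d d n h * walsh_d d n' h))"
    unfolding partial_sum_def sum_distrib_left
    by (subst sum.swap) (simp add: mult_ac)
  also have "\<dots> = (\<Sum>n'\<in>?I. if n = n' then a n' * 2 ^ (K * d) else 0)"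
    using assms by (intro sum.cong refl) (simp add: walsh_d_orthogonal_dyadic_grid_d)
  also have "\<dots> = a n * 2 ^ (K * d)"
    using assms by (simp add: sum.delta finite_PiE)
  finally show ?thesis
    by (simp add: field_simps)
qed

lemma sum_walsh_d_mult_eq_prod_walsh_dirichlet_kernel:
  "(\<Sum>n\<in>PiE {..<d} (\<lambda>l. {..<N l}). walsh_d d n h * walsh_d d n g)
    = (\<Prod>l<d. walsh_dirichlet_kernel (N l) (h l) (g l))"
  unfolding walsh_d_def walsh_dirichlet_kernel_def
  by (subst prod_sum_PiE) (simp_all add: prod.distrib)

lemma partial_sum_eq_sum_dyadic_grid_d:
  assumes "\<And>l. l < d \<Longrightarrow> N l \<le> 2 ^ K"
  shows "partial_sum d a N g
    = (\<Sum>h\<in>dyadic_grid_d d K. partial_sum d a (\<lambda>_. 2 ^ K) h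
         * (\<Prod>l<d. walsh_dirichlet_kernel (N l) (h l) (g l))) / 2 ^ (K * d)"
proof -
  let ?IN = "PiE {..<d} (\<lambda>l. {..<N l})"
  let ?G = "dyadic_grid_d d K"
  let ?S = "partial_sum d a (\<lambda>_. 2 ^ K)"
  have "?IN \<subseteq> PiE {..<d} (\<lambda>_. {..<2 ^ K})"
    using assms by (intro PiE_mono) auto
  then have coefficient: "a n = (\<Sum>h\<in>?G. walsh_d d n h * ?S h) / 2 ^ (K * d)" if "n \<in> ?IN" for n
    using that by (intro walsh_coefficient_eq_sum_dyadic_grid_d) blast
  have "partial_sum d a N g = (\<Sum>n\<in>?IN. (\<Sum>h\<in>?G. walsh_d d n h * ?S h) / 2 ^ (K * d) * walsh_d d n g)"
    unfolding partial_sum_def[of d a N] by (rule sum.cong[OF refl]) (simp only: coefficient)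
  also have "\<dots> = (\<Sum>h\<in>?G. ?S h * (\<Sum>n\<in>?IN. walsh_d d n h * walsh_d d n g)) / 2 ^ (K * d)"
    unfolding sum_divide_distrib sum_distrib_left sum_distrib_right
    by (subst sum.swap) (simp add: mult_ac)
  finally show ?thesis
    by (simp add: sum_walsh_d_mult_eq_prod_walsh_dirichlet_kernel)
qed

lemma ex_dyadic_interval_mem: "\<exists>m < 2 ^ K. x \<in> dyadic_interval K m"
proof (intro exI conjI)
  define m :: nat where "m = horner_sum of_bool 2 (rev (map x [0..<K]))"
  show "m < 2 ^ K"
    unfolding m_def using horner_sum_of_bool_2_less[of "rev (map x [0..<K])"] by simp
  show "x \<in> dyadic_interval K m"
    unfolding m_def dyadic_interval_def by (auto simp: bit_horner_sum_bit_iff rev_nth)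
qed

lemma dyadic_cube_containingE:
  assumes "h \<in> extensional {..<d}"
  obtains m where "valid_index d K m" "h \<in> dyadic_cube d K m"
proof -
  have "\<forall>l. \<exists>m < 2 ^ K. h l \<in> dyadic_interval K m"
    using ex_dyadic_interval_mem by blast
  then have "\<exists>m. \<forall>l. m l < 2 ^ K \<and> h l \<in> dyadic_interval K (m l)"
    by (rule choice)
  then obtain m where "\<forall>l. m l < 2 ^ K \<and> h l \<in> dyadic_interval K (m l)"
    by blast
  with assms show thesis
    by (intro that[of m]) (auto simp: valid_index_def dyadic_cube_def PiE_iff)
qed

lemma partial_sum_dyadic_cube_cong:
  assumes "g \<in> dyadic_cube d K m" "h \<in> dyadic_cube d K m"
  shows "partial_sum d a (\<lambda>_. 2 ^ K) g = partial_sum d a (\<lambda>_. 2 ^ K) h"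
  unfolding partial_sum_def walsh_d_def
proof (intro sum.cong prod.cong arg_cong2[where f = "(*)"] refl)
  fix n :: "nat \<Rightarrow> nat" and l assume "n \<in> PiE {..<d} (\<lambda>_. {..<2 ^ K})" "l \<in> {..<d}"
  with assms show "walsh (n l) (g l) = walsh (n l) (h l)"
    by (intro walsh_cong[of _ K]) (auto simp: dyadic_cube_def dyadic_interval_def PiE_iff)
qed

lemma partial_sum_eq_0_if_gen_quasimeasure_eq_0:
  assumes "gen_quasimeasure d a K m = 0" "h \<in> dyadic_cube d K m"
  shows "partial_sum d a (\<lambda>_. 2 ^ K) h = 0"
proof -
  let ?g = "SOME g. g \<in> dyadic_cube d K m"
  have "?g \<in> dyadic_cube d K m"
    using assms(2) by (rule someI[of "\<lambda>g. g \<in> dyadic_cube d K m"])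
  then have "partial_sum d a (\<lambda>_. 2 ^ K) h = partial_sum d a (\<lambda>_. 2 ^ K) ?g"
    using assms(2) by (rule partial_sum_dyadic_cube_cong[symmetric])
  also have "\<dots> = 0"
    using assms(1) by (simp add: gen_quasimeasure_def)
  finally show ?thesis .
qed

lemma dyadic_cube_subset_if_prefix_eq:
  assumes "w \<le> K" "h \<in> dyadic_cube d K m" "g \<in> dyadic_cube d w m0"
    and "\<And>l t. l < d \<Longrightarrow> t < w \<Longrightarrow> h l t = g l t"
  shows "dyadic_cube d K m \<subseteq> dyadic_cube d w m0"
  using assms by (auto simp: dyadic_cube_def dyadic_interval_def PiE_iff)

lemma partial_sum_mult_walsh_dirichlet_kernel_eq_0:
  assumes quasimeasure_eq_0: "\<And>k m. valid_index d k m \<Longrightarrow> dyadic_cube d k m \<subseteq> dyadic_cube d w m0 \<Longrightarrow>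
      gen_quasimeasure d a k m = 0"
    and "w \<le> K" "g \<in> dyadic_cube d w m0" "h \<in> extensional {..<d}"
  shows "partial_sum d a (\<lambda>_. 2 ^ K) h * (\<Prod>l<d. walsh_dirichlet_kernel (2 ^ w * M l) (h l) (g l)) = 0"
proof (cases "\<forall>l<d. \<forall>t<w. h l t = g l t")
  case True
  obtain m where m: "valid_index d K m" "h \<in> dyadic_cube d K m"
    using assms(4) by (rule dyadic_cube_containingE)
  with True assms(2,3) have "dyadic_cube d K m \<subseteq> dyadic_cube d w m0"
    by (intro dyadic_cube_subset_if_prefix_eq[where h = h and g = g]) auto
  with m have "partial_sum d a (\<lambda>_. 2 ^ K) h = 0"
    by (intro partial_sum_eq_0_if_gen_quasimeasure_eq_0 quasimeasure_eq_0)
  then show ?thesis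
    by simp
next
  case False
  then obtain l t where "l < d" "t < w" "h l t \<noteq> g l t"
    by blast
  then show ?thesis
    by (auto simp: prod_zero_iff intro!: bexI[of _ l] walsh_dirichlet_kernel_eq_0)
qed

theorem proposition3:
  fixes d w :: nat and m0 :: "nat \<Rightarrow> nat" and a :: "(nat \<Rightarrow> nat) \<Rightarrow> real"
  assumes "d \<ge> 2"
    and "valid_index d w m0"
    and "\<And>k m. valid_index d k m \<Longrightarrow> dyadic_cube d k m \<subseteq> dyadic_cube d w m0 \<Longrightarrow>
            gen_quasimeasure d a k m = 0"
  shows "\<forall>g \<in> dyadic_cube d w m0. \<forall>M. (\<forall>l<d. M l \<ge> 1) \<longrightarrow>
            partial_sum d a (\<lambda>l. 2 ^ w * M l) g = 0"
proof (intro ballI allI impI)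
  fix g and M :: "nat \<Rightarrow> nat"
  assume g: "g \<in> dyadic_cube d w m0"
  define K where "K = w + (\<Sum>l<d. M l)"
  have "M l \<le> 2 ^ (\<Sum>l<d. M l)" if "l < d" for l
  proof -
    have "M l \<le> (\<Sum>l<d. M l)"
      using that by (intro member_le_sum) auto
    also have "\<dots> \<le> 2 ^ (\<Sum>l<d. M l)"
      by (rule less_imp_le[OF less_exp])
    finally show ?thesis .
  qed
  then have "partial_sum d a (\<lambda>l. 2 ^ w * M l) g
      = (\<Sum>h\<in>dyadic_grid_d d K. partial_sum d a (\<lambda>_. 2 ^ K) h
           * (\<Prod>l<d. walsh_dirichlet_kernel (2 ^ w * M l) (h l) (g l))) / 2 ^ (K * d)"
    by (intro partial_sum_eq_sum_dyadic_grid_d) (simp add: K_def power_add)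
  also have "\<dots> = 0"
    using assms(3) g
    by (intro divide_eq_0_iff[THEN iffD2] disjI1 sum.neutral ballI
        partial_sum_mult_walsh_dirichlet_kernel_eq_0) (auto simp: K_def dyadic_grid_d_def PiE_iff)
  finally show "partial_sum d a (\<lambda>l. 2 ^ w * M l) g = 0" .
qed

end
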